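(* Pairwise statistical parity $PSP$ satisfies monotonicity but does not satisfy deepness. Here (for rankings $r$ of the full population $\mathcal D$, $n=|\mathcal D|$): monotonicity means that for every population $\mathcal D$, every ranking $r$ of $\mathcal D$ and positions $i<j$ with $r(i)\in G_0$, $r(j)\in G_1$ and $y(r(i))\le y(r(j))$, one has $PSP(r_{i\leftrightarrow j})>PSP(r)$; deepness means that for every population $\mathcal D$, every ranking $r$ of $\mathcal D$ and positions $i<j$ (with $j+1\le n$) such that $y(r(i))=y(r(j))$, $y(r(i+1))=y(r(j+1))$, and either ($r(i),r(j)\in G_0$ and $r(i+1),r(j+1)\in G_1$) or ($r(i),r(j)\in G_1$ and $r(i+1),r(j+1)\in G_0$), one has $|PSP(r)-PSP(r_{i\leftrightarrow i+1})|>|PSP(r)-PSP(r_{j\leftrightarrow j+1})|$.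
   Context: A population is a finite set $\mathcal{D}$ of candidates partitioned into two nonempty groups, a non-protected group $G_0$ and a protected group $G_1$; each candidate $d$ has a relevance score $y(d)\in\mathbb R$. A ranking of $\mathcal D$ is a bijection $r:\{1,\dots,n\}\to\mathcal D$, $n=|\mathcal D|$; $d\succ_r d'$ means $d$ is at a smaller position than $d'$; $r_{i\leftrightarrow j}$ is $r$ with the candidates at positions $i,j$ swapped. Pairwise statistical parity (defined only for rankings of the full population): $PSP(r)=\frac{|\{(d,d')\in G_0\times G_1: d'\succ_r d\}|-|\{(d,d')\in G_0\times G_1: d\succ_r d'\}|}{|G_0\times G_1|}$. *)

theory Defs
  imports Main "HOL.Real"
begin

text \<open>Candidates are natural numbers (any finite population is isomorphic to one).
  A population: finite set D partitioned into nonempty G0 (non-protected), G1 (protected).\<close>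

definition population :: "nat set \<Rightarrow> nat set \<Rightarrow> nat set \<Rightarrow> bool" where
  "population D G0 G1 \<longleftrightarrow> finite D \<and> G0 \<noteq> {} \<and> G1 \<noteq> {} \<and> G0 \<inter> G1 = {} \<and> G0 \<union> G1 = D"

definition is_ranking :: "nat set \<Rightarrow> (nat \<Rightarrow> nat) \<Rightarrow> bool" where
  "is_ranking D r \<longleftrightarrow> bij_betw r {1..card D} D"

definition ranked_before :: "nat \<Rightarrow> (nat \<Rightarrow> nat) \<Rightarrow> nat \<Rightarrow> nat \<Rightarrow> bool" where
  "ranked_before n r d d' \<longleftrightarrow> (\<exists>i j. 1 \<le> i \<and> i < j \<and> j \<le> n \<and> r i = d \<and> r j = d')"

definition swap_pos :: "(nat \<Rightarrow> nat) \<Rightarrow> nat \<Rightarrow> nat \<Rightarrow> (nat \<Rightarrow> nat)" where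
  "swap_pos r i j = r(i := r j, j := r i)"

definition PSP :: "nat set \<Rightarrow> nat set \<Rightarrow> nat \<Rightarrow> (nat \<Rightarrow> nat) \<Rightarrow> real" where
  "PSP G0 G1 n r =
     (real (card {(d, d'). d \<in> G0 \<and> d' \<in> G1 \<and> ranked_before n r d' d})
      - real (card {(d, d'). d \<in> G0 \<and> d' \<in> G1 \<and> ranked_before n r d d'}))
     / real (card (G0 \<times> G1))"

definition PSP_monotone :: bool where
  "PSP_monotone \<longleftrightarrow>
    (\<forall>D G0 G1 (y :: nat \<Rightarrow> real) r i j.
       population D G0 G1 \<and> is_ranking D r \<and> 1 \<le> i \<and> i < j \<and> j \<le> card D \<and>
       r i \<in> G0 \<and> r j \<in> G1 \<and> y (r i) \<le> y (r j)
       \<longrightarrow> PSP G0 G1 (card D) (swap_pos r i j) > PSP G0 G1 (card D) r)"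

definition PSP_deep :: bool where
  "PSP_deep \<longleftrightarrow>
    (\<forall>D G0 G1 (y :: nat \<Rightarrow> real) r i j.
       population D G0 G1 \<and> is_ranking D r \<and> 1 \<le> i \<and> i < j \<and> j + 1 \<le> card D \<and>
       y (r i) = y (r j) \<and> y (r (i+1)) = y (r (j+1)) \<and>
       ((r i \<in> G0 \<and> r j \<in> G0 \<and> r (i+1) \<in> G1 \<and> r (j+1) \<in> G1) \<or>
        (r i \<in> G1 \<and> r j \<in> G1 \<and> r (i+1) \<in> G0 \<and> r (j+1) \<in> G0))
       \<longrightarrow> \<bar>PSP G0 G1 (card D) r - PSP G0 G1 (card D) (swap_pos r i (i+1))\<bar>
           > \<bar>PSP G0 G1 (card D) r - PSP G0 G1 (card D) (swap_pos r j (j+1))\<bar>)"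

end

(* Swapping positions i < j of a ranking moves its candidates along the transposition of i and j,
   which keeps the relative order of every pair except those with the first candidate at i or
   the second at j. So if a G0 candidate at i is swapped with a G1 candidate at j, every
   G1-before-G0 pair survives and the pair of swapped candidates is added, while every
   G0-before-G1 pair of the new ranking was already one and that pair is lost: PSP strictly
   increases. An adjacent swap reverses exactly one pair, so when the two candidates are from
   different groups it changes PSP by exactly 2 / |G0 x G1|, wherever in the ranking it happens;
   the strict inequality demanded by deepness therefore fails on every instance. *)

theory Submission
  imports Defs "HOL-Combinatorics.Transposition"
begin

lemma swap_pos_eq_comp_transpose: "swap_pos r i j = r \<circ> Transposition.transpose i j"
  unfolding swap_pos_def Fun.swap_def ..

lemma swap_pos_apply [simp]: "swap_pos r i j i = r j" "swap_pos r i j j = r i"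
  by (simp_all add: swap_pos_def)

lemma swap_pos_swap_pos [simp]: "swap_pos (swap_pos r i j) i j = r"
  by (simp add: swap_pos_eq_comp_transpose comp_assoc)

lemma is_ranking_swap_pos:
  assumes "is_ranking D r" "i \<in> {1..card D}" "j \<in> {1..card D}"
  shows "is_ranking D (swap_pos r i j)"
  using assms by (simp add: is_ranking_def swap_pos_eq_comp_transpose bij_betw_swap_iff)

lemma ranked_beforeI: "1 \<le> p \<Longrightarrow> p < q \<Longrightarrow> q \<le> n \<Longrightarrow> ranked_before n r (r p) (r q)"
  unfolding ranked_before_def by blast

lemma ranked_before_asym:
  assumes "inj_on r {1..n}" "ranked_before n r a b"
  shows "\<not> ranked_before n r b a"
proof
  assume "ranked_before n r b a"
  with assms obtain p q p' q' where "1 \<le> p" "p < q" "q \<le> n" "1 \<le> p'" "p' < q'" "q' \<le> n"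
    and "r p = a" "r q = b" "r p' = b" "r q' = a"
    unfolding ranked_before_def by blast
  with assms(1) have "p = q'" "q = p'" by (auto dest: inj_onD)
  with \<open>p < q\<close> \<open>p' < q'\<close> show False by simp
qed

lemma ranked_before_swap_posI:
  assumes "1 \<le> p" "p < q" "q \<le> n" "i \<in> {1..n}" "j \<in> {1..n}"
    and "Transposition.transpose i j p < Transposition.transpose i j q"
  shows "ranked_before n (swap_pos r i j) (r p) (r q)"
proof -
  let ?t = "Transposition.transpose i j"
  have "1 \<le> ?t p" "?t q \<le> n"
    using assms by (auto simp: transpose_def)
  then have "ranked_before n (swap_pos r i j) (swap_pos r i j (?t p)) (swap_pos r i j (?t q))"
    using assms(6) by (simp add: ranked_beforeI)
  then show ?thesis by (simp add: swap_pos_eq_comp_transpose)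
qed

lemma ranked_before_swap_pos:
  assumes "1 \<le> i" "i < j" "j \<le> n" "ranked_before n r a b" "a \<noteq> r i" "b \<noteq> r j"
  shows "ranked_before n (swap_pos r i j) a b"
proof -
  obtain p q where pq: "1 \<le> p" "p < q" "q \<le> n" "r p = a" "r q = b"
    using assms(4) unfolding ranked_before_def by blast
  with assms have "p \<noteq> i" "q \<noteq> j" by auto
  with pq assms have "Transposition.transpose i j p < Transposition.transpose i j q"
    by (auto simp: transpose_def)
  with pq assms show ?thesis using ranked_before_swap_posI by fastforce
qed

lemma ranked_before_swap_pos_adjacent:
  assumes "1 \<le> i" "Suc i \<le> n" "ranked_before n r a b" "(a, b) \<noteq> (r i, r (Suc i))"
  shows "ranked_before n (swap_pos r i (Suc i)) a b"
proof -
  obtain p q where pq: "1 \<le> p" "p < q" "q \<le> n" "r p = a" "r q = b"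
    using assms(3) unfolding ranked_before_def by blast
  with assms have "(p, q) \<noteq> (i, Suc i)" by auto
  with pq have "Transposition.transpose i (Suc i) p < Transposition.transpose i (Suc i) q"
    by (auto simp: transpose_def)
  with pq assms show ?thesis using ranked_before_swap_posI by fastforce
qed

definition before_pairs ::
  "nat set \<Rightarrow> nat set \<Rightarrow> nat \<Rightarrow> (nat \<Rightarrow> nat) \<Rightarrow> (nat \<times> nat) set" where
  "before_pairs A B n r = {(a, b). a \<in> A \<and> b \<in> B \<and> ranked_before n r a b}"

lemma finite_before_pairs: "finite A \<Longrightarrow> finite B \<Longrightarrow> finite (before_pairs A B n r)"
  by (rule finite_subset[of _ "A \<times> B"]) (auto simp: before_pairs_def)

lemma PSP_before_pairs:
  "PSP G0 G1 n r =
     (real (card (before_pairs G1 G0 n r)) - real (card (before_pairs G0 G1 n r)))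
     / real (card (G0 \<times> G1))"
proof -
  have "{(d, d'). d \<in> G0 \<and> d' \<in> G1 \<and> ranked_before n r d' d}
        = prod.swap ` before_pairs G1 G0 n r"
    by (auto simp: before_pairs_def)
  then show ?thesis
    by (simp add: PSP_def card_image before_pairs_def)
qed

lemma population_card_pos: "population D G0 G1 \<Longrightarrow> 0 < card (G0 \<times> G1)"
  by (auto simp: population_def card_gt_0_iff dest: finite_subset)

lemma before_pairs_swap_pos_mono:
  assumes "A \<inter> B = {}" "r i \<in> A" "r j \<in> B" "1 \<le> i" "i < j" "j \<le> n"
  shows "before_pairs B A n r \<subseteq> before_pairs B A n (swap_pos r i j)"
  using assms ranked_before_swap_pos[of i j n r] by (auto simp: before_pairs_def)

lemma PSP_monotone: PSP_monotone
  unfolding PSP_monotone_def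
proof (intro allI impI, elim conjE)
  fix D G0 G1 r i j
  assume pop: "population D G0 G1" and rk: "is_ranking D r"
    and ij: "1 \<le> i" "i < j" "j \<le> card D" and G: "r i \<in> G0" "r j \<in> G1"
  let ?n = "card D" and ?r = "swap_pos r i j"
  have fin: "finite G0" "finite G1" and dis: "G0 \<inter> G1 = {}" "G1 \<inter> G0 = {}"
    using pop by (auto simp: population_def)
  have inj: "inj_on r {1..?n}" "inj_on ?r {1..?n}"
    using rk is_ranking_swap_pos[OF rk, of i j] ij by (auto simp: is_ranking_def bij_betw_def)
  have r_ij: "ranked_before ?n r (r i) (r j)" and r'_ji: "ranked_before ?n ?r (r j) (r i)"
    using ranked_beforeI[of i j ?n r] ranked_beforeI[of i j ?n ?r] ij by simp_all
  have "before_pairs G1 G0 ?n r \<subseteq> before_pairs G1 G0 ?n ?r"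
    using before_pairs_swap_pos_mono[OF dis(1) G ij] .
  moreover have "(r j, r i) \<in> before_pairs G1 G0 ?n ?r - before_pairs G1 G0 ?n r"
    using G r'_ji ranked_before_asym[OF inj(1) r_ij] by (simp add: before_pairs_def)
  moreover have "before_pairs G0 G1 ?n ?r \<subseteq> before_pairs G0 G1 ?n r"
    using before_pairs_swap_pos_mono[OF dis(2), of ?r i j] G ij by simp
  moreover have "(r i, r j) \<in> before_pairs G0 G1 ?n r - before_pairs G0 G1 ?n ?r"
    using G r_ij ranked_before_asym[OF inj(2) r'_ji] by (simp add: before_pairs_def)
  ultimately have "card (before_pairs G1 G0 ?n r) < card (before_pairs G1 G0 ?n ?r)"
    "card (before_pairs G0 G1 ?n ?r) < card (before_pairs G0 G1 ?n r)"
    by (metis Diff_iff psubsetI psubset_card_mono finite_before_pairs fin)+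
  then show "PSP G0 G1 ?n r < PSP G0 G1 ?n ?r"
    using population_card_pos[OF pop]
    by (simp add: PSP_before_pairs divide_strict_right_mono)
qed

lemma before_pairs_swap_pos_adjacent:
  assumes "A \<inter> B = {}" "r i \<in> A" "r (Suc i) \<in> B" "1 \<le> i" "Suc i \<le> n"
  shows "before_pairs B A n (swap_pos r i (Suc i))
           = insert (r (Suc i), r i) (before_pairs B A n r)"
proof -
  let ?r = "swap_pos r i (Suc i)"
  have "ranked_before n ?r (?r i) (?r (Suc i))"
    using assms by (intro ranked_beforeI) auto
  then have new: "ranked_before n ?r (r (Suc i)) (r i)" by simp
  have "ranked_before n ?r a b \<longleftrightarrow> ranked_before n r a b"
    if "a \<in> B" "b \<in> A" "(a, b) \<noteq> (r (Suc i), r i)" for a b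
    using that assms ranked_before_swap_pos_adjacent[of i n r a b]
      ranked_before_swap_pos_adjacent[of i n ?r a b] by auto
  with new assms show ?thesis by (auto simp: before_pairs_def)
qed

lemma card_before_pairs_swap_pos_adjacent:
  assumes "A \<inter> B = {}" "r i \<in> A" "r (Suc i) \<in> B" "1 \<le> i" "Suc i \<le> n"
    and "inj_on r {1..n}" "finite A" "finite B"
  shows "card (before_pairs B A n (swap_pos r i (Suc i))) = Suc (card (before_pairs B A n r))"
proof -
  have "ranked_before n r (r i) (r (Suc i))"
    using assms by (intro ranked_beforeI) auto
  then have "(r (Suc i), r i) \<notin> before_pairs B A n r"
    using ranked_before_asym[OF assms(6)] by (simp add: before_pairs_def)
  then show ?thesis
    using assms by (simp add: before_pairs_swap_pos_adjacent finite_before_pairs)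
qed

lemma PSP_swap_pos_adjacent:
  assumes pop: "population D G0 G1" and rk: "is_ranking D r"
    and i: "1 \<le> i" "Suc i \<le> card D" and G: "r i \<in> G0" "r (Suc i) \<in> G1"
  shows "PSP G0 G1 (card D) (swap_pos r i (Suc i))
           = PSP G0 G1 (card D) r + 2 / real (card (G0 \<times> G1))"
proof -
  let ?n = "card D" and ?r = "swap_pos r i (Suc i)"
  have fin: "finite G0" "finite G1" and dis: "G0 \<inter> G1 = {}" "G1 \<inter> G0 = {}"
    using pop by (auto simp: population_def)
  have inj: "inj_on r {1..?n}" "inj_on ?r {1..?n}"
    using rk is_ranking_swap_pos[OF rk, of i "Suc i"] i by (auto simp: is_ranking_def bij_betw_def)
  have "card (before_pairs G1 G0 ?n ?r) = Suc (card (before_pairs G1 G0 ?n r))"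
    using card_before_pairs_swap_pos_adjacent[OF dis(1) G i inj(1) fin] .
  moreover have "card (before_pairs G0 G1 ?n r) = Suc (card (before_pairs G0 G1 ?n ?r))"
    using card_before_pairs_swap_pos_adjacent[OF dis(2) _ _ i inj(2) fin(2,1)] G by simp
  ultimately show ?thesis
    using population_card_pos[OF pop] by (simp add: PSP_before_pairs field_simps)
qed

lemma abs_PSP_swap_pos_adjacent:
  assumes pop: "population D G0 G1" and rk: "is_ranking D r" and i: "1 \<le> i" "Suc i \<le> card D"
    and G: "r i \<in> G0 \<and> r (Suc i) \<in> G1 \<or> r i \<in> G1 \<and> r (Suc i) \<in> G0"
  shows "\<bar>PSP G0 G1 (card D) r - PSP G0 G1 (card D) (swap_pos r i (Suc i))\<bar>
           = 2 / real (card (G0 \<times> G1))"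
  using G
proof
  assume "r i \<in> G0 \<and> r (Suc i) \<in> G1"
  then show ?thesis using PSP_swap_pos_adjacent[OF pop rk i] by simp
next
  assume "r i \<in> G1 \<and> r (Suc i) \<in> G0"
  moreover have "is_ranking D (swap_pos r i (Suc i))"
    using is_ranking_swap_pos[OF rk] i by simp
  ultimately show ?thesis
    using PSP_swap_pos_adjacent[OF pop _ i, of "swap_pos r i (Suc i)"] by simp
qed

lemma not_PSP_deep: "\<not> PSP_deep"
proof
  assume PSP_deep
  define D G0 G1 where "D = {1..4 :: nat}" and "G0 = {1, 3 :: nat}" and "G1 = {2, 4 :: nat}"
  have card: "card D = 4" and pop: "population D G0 G1" and rk: "is_ranking D id"
    by (auto simp: D_def G0_def G1_def population_def is_ranking_def)
  have deep: "\<bar>PSP G0 G1 4 id - PSP G0 G1 4 (swap_pos id 1 (Suc 1))\<bar>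
      > \<bar>PSP G0 G1 4 id - PSP G0 G1 4 (swap_pos id 3 (Suc 3))\<bar>"
    using \<open>PSP_deep\<close> pop rk card unfolding PSP_deep_def
    by (elim allE[of _ D] allE[of _ G0] allE[of _ G1] allE[of _ "\<lambda>_. 0"] allE[of _ id]
        allE[of _ 1] allE[of _ 3]) (simp add: G0_def G1_def)
  have adjacent:
    "\<bar>PSP G0 G1 4 id - PSP G0 G1 4 (swap_pos id k (Suc k))\<bar> = 2 / real (card (G0 \<times> G1))"
    if "k \<in> {1, 3}" for k
    using abs_PSP_swap_pos_adjacent[OF pop rk, of k] that card by (auto simp: G0_def G1_def)
  show False
    using deep adjacent[of 1] adjacent[of 3] by simp
qed

theorem theorem11:
  shows "PSP_monotone \<and> \<not> PSP_deep"
  using PSP_monotone not_PSP_deep ..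

end
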